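(* Let $G$ be a countable infinite discrete group, $X$ an infinite compact Hausdorff space and $\beta: G\curvearrowright X$ a minimal, topologically free continuous action with no $G$-invariant regular Borel probability measure and with dynamical comparison. Let $Y$ be a compact Hausdorff space and $\alpha: G\curvearrowright X\times Y$ the action $\alpha_g(x,y)=(\beta_g(x),y)$; let $\pi_Y: X\times Y\to Y$ be the projection. Then: (i) every $G$-invariant closed subset $M\subset X\times Y$ satisfies $M=X\times\pi_Y(M)$; (ii) $\alpha$ is essentially free.
   Context: Subequivalence for $\beta$: for closed $F$ and open $O$ in $X$, $F\prec O$ if there exist a finite open cover $\mathcal{U}$ of $F$ and $s_U\in G$ with the sets $\beta_{s_U}(U)$ pairwise disjoint subsets of $O$; for open $V$, $V\prec O$ means $F\prec O$ for all closed $F\subset V$. Dynamical comparison: $V\prec O$ for every open $V$ and nonempty open $O$ with $\mu(V)<\mu(O)$ for all $G$-invariant regular Borel probability measures $\mu$. Topologically free: fixed point sets of non-identity elements have empty interior. Essentially free: for every closed $G$-invariant subset $Z$ the set of points of $Z$ with trivial stabilizer is dense in $Z$. *)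

theory Defs
  imports "HOL-Probability.Probability" "HOL-Algebra.Group"
begin

definition cont_action :: "('g, 'm) monoid_scheme \<Rightarrow> ('g \<Rightarrow> 'a::topological_space \<Rightarrow> 'a) \<Rightarrow> bool" where
  "cont_action G act \<longleftrightarrow>
     (\<forall>g\<in>carrier G. continuous_on UNIV (act g)) \<and>
     act \<one>\<^bsub>G\<^esub> = id \<and>
     (\<forall>g\<in>carrier G. \<forall>h\<in>carrier G. act (g \<otimes>\<^bsub>G\<^esub> h) = act g \<circ> act h)"

definition invariant_set :: "('g, 'm) monoid_scheme \<Rightarrow> ('g \<Rightarrow> 'a \<Rightarrow> 'a) \<Rightarrow> 'a set \<Rightarrow> bool" where
  "invariant_set G act A \<longleftrightarrow> (\<forall>g\<in>carrier G. act g ` A \<subseteq> A)"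

definition minimal_action :: "('g, 'm) monoid_scheme \<Rightarrow> ('g \<Rightarrow> 'a::topological_space \<Rightarrow> 'a) \<Rightarrow> bool" where
  "minimal_action G act \<longleftrightarrow>
     (\<forall>Z. closed Z \<and> invariant_set G act Z \<longrightarrow> Z = {} \<or> Z = UNIV)"

definition topologically_free :: "('g, 'm) monoid_scheme \<Rightarrow> ('g \<Rightarrow> 'a::topological_space \<Rightarrow> 'a) \<Rightarrow> bool" where
  "topologically_free G act \<longleftrightarrow>
     (\<forall>g\<in>carrier G. g \<noteq> \<one>\<^bsub>G\<^esub> \<longrightarrow> interior {x. act g x = x} = {})"

definition trivial_stabilizer :: "('g, 'm) monoid_scheme \<Rightarrow> ('g \<Rightarrow> 'a \<Rightarrow> 'a) \<Rightarrow> 'a \<Rightarrow> bool" where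
  "trivial_stabilizer G act x \<longleftrightarrow> (\<forall>g\<in>carrier G. act g x = x \<longrightarrow> g = \<one>\<^bsub>G\<^esub>)"

definition essentially_free :: "('g, 'm) monoid_scheme \<Rightarrow> ('g \<Rightarrow> 'a::topological_space \<Rightarrow> 'a) \<Rightarrow> bool" where
  "essentially_free G act \<longleftrightarrow>
     (\<forall>Z. closed Z \<and> invariant_set G act Z \<longrightarrow>
          Z \<subseteq> closure {x\<in>Z. trivial_stabilizer G act x})"

definition regular_borel :: "'a::topological_space measure \<Rightarrow> bool" where
  "regular_borel M \<longleftrightarrow> sets M = sets borel \<and>
     (\<forall>A\<in>sets M.
        emeasure M A = (SUP K\<in>{K. compact K \<and> K \<subseteq> A}. emeasure M K) \<and>
        emeasure M A = (INF U\<in>{U. open U \<and> A \<subseteq> U}. emeasure M U))"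

definition invariant_measure :: "('g, 'm) monoid_scheme \<Rightarrow> ('g \<Rightarrow> 'a::topological_space \<Rightarrow> 'a) \<Rightarrow> 'a measure \<Rightarrow> bool" where
  "invariant_measure G act M \<longleftrightarrow>
     prob_space M \<and> regular_borel M \<and>
     (\<forall>g\<in>carrier G. \<forall>A\<in>sets M. emeasure M (act g -` A) = emeasure M A)"

definition subequiv_closed :: "('g, 'm) monoid_scheme \<Rightarrow> ('g \<Rightarrow> 'a::topological_space \<Rightarrow> 'a) \<Rightarrow> 'a set \<Rightarrow> 'a set \<Rightarrow> bool" where
  "subequiv_closed G act F W \<longleftrightarrow>
     (\<exists>UU s. finite UU \<and> (\<forall>U\<in>UU. open U) \<and> F \<subseteq> \<Union>UU \<and>
            (\<forall>U\<in>UU. s U \<in> carrier G \<and> act (s U) ` U \<subseteq> W) \<and>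
            (\<forall>U\<in>UU. \<forall>U'\<in>UU. U \<noteq> U' \<longrightarrow> act (s U) ` U \<inter> act (s U') ` U' = {}))"

definition subequiv_open :: "('g, 'm) monoid_scheme \<Rightarrow> ('g \<Rightarrow> 'a::topological_space \<Rightarrow> 'a) \<Rightarrow> 'a set \<Rightarrow> 'a set \<Rightarrow> bool" where
  "subequiv_open G act V W \<longleftrightarrow> (\<forall>F. closed F \<and> F \<subseteq> V \<longrightarrow> subequiv_closed G act F W)"

definition dynamical_comparison :: "('g, 'm) monoid_scheme \<Rightarrow> ('g \<Rightarrow> 'a::topological_space \<Rightarrow> 'a) \<Rightarrow> bool" where
  "dynamical_comparison G act \<longleftrightarrow>
     (\<forall>V W. open V \<and> open W \<and> W \<noteq> {} \<and>
        (\<forall>M. invariant_measure G act M \<longrightarrow> measure M V < measure M W)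
        \<longrightarrow> subequiv_open G act V W)"

end

theory Submission
  imports Defs
begin

text \<open>Only minimality and topological freeness of \<open>\<beta>\<close> matter. A closed invariant set meets every
  fibre \<open>X \<times> {y}\<close> in a closed \<open>\<beta>\<close>-invariant set, which by minimality is empty or everything;
  hence it is a cylinder \<open>X \<times> B\<close>. The stabilizer of \<open>(x, y)\<close> is that of \<open>x\<close>, and by the Baire
  category theorem the points of \<open>X\<close> with trivial stabilizer are dense, being the complement of
  countably many closed fixed point sets with empty interior. So the free points of \<open>X \<times> B\<close> are
  dense in it.\<close>

lemma invariant_closed_eq_cylinder:
  fixes \<beta> :: "'g \<Rightarrow> 'x::topological_space \<Rightarrow> 'x" and M :: "('x \<times> 'y::topological_space) set"
  assumes "minimal_action G \<beta>"
    and "closed M" and "invariant_set G (\<lambda>g (x, y). (\<beta> g x, y)) M"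
  shows "M = UNIV \<times> snd ` M"
proof
  show "M \<subseteq> UNIV \<times> snd ` M"
    by force
  show "UNIV \<times> snd ` M \<subseteq> M"
  proof
    fix p assume "p \<in> (UNIV :: 'x set) \<times> snd ` M"
    then obtain x x0 y where p: "p = (x, y)" and "(x0, y) \<in> M"
      by force
    define Z where "Z = (\<lambda>x. (x, y)) -` M"
    have "closed Z"
      unfolding Z_def using assms(2) by (auto intro!: continuous_closed_vimage continuous_intros)
    moreover have "invariant_set G \<beta> Z"
      using assms(3) unfolding invariant_set_def Z_def by fastforce
    ultimately have "Z = {} \<or> Z = UNIV"
      using assms(1) unfolding minimal_action_def by blast
    with \<open>(x0, y) \<in> M\<close> show "p \<in> M"
      unfolding Z_def p by auto
  qed
qed

lemma Hausdorff_space_euclidean_t2: "Hausdorff_space (euclidean :: 'a::t2_space topology)"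
  unfolding Hausdorff_space_def disjnt_def using hausdorff by fastforce

lemma closure_trivial_stabilizer_eq_UNIV:
  fixes \<beta> :: "'g \<Rightarrow> 'x::t2_space \<Rightarrow> 'x"
  assumes "countable (carrier G)" and "compact (UNIV :: 'x set)"
    and "cont_action G \<beta>" and "topologically_free G \<beta>"
  shows "closure {x. trivial_stabilizer G \<beta> x} = UNIV"
proof -
  define \<F> where "\<F> = (\<lambda>g. {x. \<beta> g x = x}) ` (carrier G - {\<one>\<^bsub>G\<^esub>})"
  have compact_space: "compact_space (euclidean :: 'x topology)"
    using assms(2) by (simp add: compact_space_def)
  have "euclidean interior_of \<Union>\<F> = {}"
  proof (rule Baire_category_alt)
    have "locally_compact_space (euclidean :: 'x topology)"
      using compact_space by (rule compact_imp_locally_compact_space)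
    moreover have "regular_space (euclidean :: 'x topology)"
      using compact_space Hausdorff_space_euclidean_t2 by (rule compact_Hausdorff_imp_regular_space)
    ultimately show "completely_metrizable_space (euclidean :: 'x topology) \<or>
          locally_compact_space (euclidean :: 'x topology) \<and> regular_space (euclidean :: 'x topology)"
      by blast
    show "countable \<F>"
      unfolding \<F>_def using assms(1) by simp
  next
    fix T assume "T \<in> \<F>"
    then obtain g where g: "g \<in> carrier G" "g \<noteq> \<one>\<^bsub>G\<^esub>" and T: "T = {x. \<beta> g x = x}"
      unfolding \<F>_def by auto
    have "continuous_on UNIV (\<beta> g)"
      using assms(3) g unfolding cont_action_def by auto
    then have "closed T"
      unfolding T by (auto intro!: closed_Collect_eq continuous_on_id)
    moreover have "interior T = {}"
      using assms(4) g T unfolding topologically_free_def by auto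
    ultimately show "closedin euclidean T \<and> euclidean interior_of T = {}"
      by simp
  qed
  moreover have "{x. trivial_stabilizer G \<beta> x} = - \<Union>\<F>"
    unfolding \<F>_def trivial_stabilizer_def by auto
  ultimately show ?thesis
    by (simp add: closure_interior)
qed

lemma trivial_stabilizer_fst_action:
  "trivial_stabilizer G (\<lambda>g (x, y). (\<beta> g x, y)) (x, y) \<longleftrightarrow> trivial_stabilizer G \<beta> x"
  by (simp add: trivial_stabilizer_def)

lemma essentially_free_fst_action:
  fixes \<beta> :: "'g \<Rightarrow> 'x::topological_space \<Rightarrow> 'x"
  assumes "minimal_action G \<beta>" and "closure {x. trivial_stabilizer G \<beta> x} = UNIV"
  shows "essentially_free G (\<lambda>g (x, y :: 'y::topological_space). (\<beta> g x, y))"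
  unfolding essentially_free_def
proof clarify
  fix Z :: "('x \<times> 'y) set" and x y
  assume Z: "closed Z" "invariant_set G (\<lambda>g (x, y). (\<beta> g x, y)) Z" and "(x, y) \<in> Z"
  define F where "F = {x. trivial_stabilizer G \<beta> x}"
  have y: "y \<in> closure (snd ` Z)"
    using \<open>(x, y) \<in> Z\<close> closure_subset by force
  have "Z = UNIV \<times> snd ` Z"
    using invariant_closed_eq_cylinder[OF assms(1) Z] .
  then have "F \<times> snd ` Z \<subseteq> {z\<in>Z. trivial_stabilizer G (\<lambda>g (x, y). (\<beta> g x, y)) z}"
    unfolding F_def by (auto simp: trivial_stabilizer_fst_action)
  then have "closure F \<times> closure (snd ` Z) \<subseteq>
             closure {z\<in>Z. trivial_stabilizer G (\<lambda>g (x, y). (\<beta> g x, y)) z}"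
    unfolding closure_Times[symmetric] by (rule closure_mono)
  moreover have "(x, y) \<in> closure F \<times> closure (snd ` Z)"
    using assms(2) y unfolding F_def by simp
  ultimately show "(x, y) \<in> closure {z\<in>Z. trivial_stabilizer G (\<lambda>g (x, y). (\<beta> g x, y)) z}"
    by blast
qed

theorem proposition5p1:
  fixes G :: "('g, 'm) monoid_scheme"
    and \<beta> :: "'g \<Rightarrow> 'x::t2_space \<Rightarrow> 'x"
  assumes "group G"
    and "countable (carrier G)" and "infinite (carrier G)"
    and "compact (UNIV :: 'x set)" and "infinite (UNIV :: 'x set)"
    and "compact (UNIV :: 'y::t2_space set)"
    and "cont_action G \<beta>"
    and "minimal_action G \<beta>"
    and "topologically_free G \<beta>"
    and "\<not> (\<exists>M. invariant_measure G \<beta> M)"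
    and "dynamical_comparison G \<beta>"
  shows "(\<forall>M :: ('x \<times> 'y) set. closed M \<and> invariant_set G (\<lambda>g (x, y). (\<beta> g x, y)) M
            \<longrightarrow> M = UNIV \<times> snd ` M)
       \<and> essentially_free G (\<lambda>g (x, y :: 'y). (\<beta> g x, y))"
proof (intro conjI allI impI)
  fix M :: "('x \<times> 'y) set"
  assume "closed M \<and> invariant_set G (\<lambda>g (x, y). (\<beta> g x, y)) M"
  then show "M = UNIV \<times> snd ` M"
    using invariant_closed_eq_cylinder[OF assms(8)] by blast
next
  have "closure {x. trivial_stabilizer G \<beta> x} = UNIV"
    using closure_trivial_stabilizer_eq_UNIV[OF assms(2,4,7,9)] .
  then show "essentially_free G (\<lambda>g (x, y :: 'y). (\<beta> g x, y))"
    using essentially_free_fst_action[OF assms(8)] by blast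
qed

end
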